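(* Let $(M_t)_{t\ge0}$ be a pure-jump Lévy process with characteristic function $E[e^{iuM_t}]=\exp\big(t\int_{-1}^1(e^{iux}-1-iux)\,\mu(dx)\big)$, where the Lévy measure $\mu$ satisfies $\operatorname{supp}(\mu)\subset[-1,1]$ and there exists $\alpha\in(0,2)$ with $\int_{-v}^vx^2\,\mu(dx)=O(v^{2-\alpha})$ as $v\downarrow0$. Let $f\in C^\infty(\mathbb R)$ satisfy $f(x)=x^2$ for $|x|\le1$, $f(x)=0$ for $|x|>2$ and $f(x)\in[0,2]$ for $1<|x|\le2$, and set $f^v(x)=v^2f(x/v)$ for $v>0$. Then for all $\beta\in(0,1/2)$, $$E\big[f^{t^\beta}(M_t)\big]=O\big(t^{1+\beta(2-\alpha)}\big)\quad\text{as }t\downarrow0.$$ *)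

theory Defs
  imports "HOL-Probability.Probability" "HOL-Library.Landau_Symbols"
begin

definition C_infinity :: "(real \<Rightarrow> real) \<Rightarrow> bool" where
  "C_infinity f \<longleftrightarrow> (\<forall>n x. ((deriv ^^ n) f) differentiable (at x))"

definition levy_measure :: "real measure \<Rightarrow> bool" where
  "levy_measure \<mu> \<longleftrightarrow> sets \<mu> = sets borel \<and> emeasure \<mu> {0} = 0 \<and>
     (\<integral>\<^sup>+ x. ennreal (min 1 (x\<^sup>2)) \<partial>\<mu>) < \<infinity>"

definition levy_process :: "'a measure \<Rightarrow> (real \<Rightarrow> 'a \<Rightarrow> real) \<Rightarrow> bool" where
  "levy_process P M \<longleftrightarrow> prob_space P \<and>
     (\<forall>t\<ge>0. M t \<in> borel_measurable P) \<and>
     (AE \<omega> in P. M 0 \<omega> = 0) \<and>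
     (\<forall>s t. 0 \<le> s \<and> s \<le> t \<longrightarrow>
        distr P borel (\<lambda>\<omega>. M t \<omega> - M s \<omega>) = distr P borel (M (t - s))) \<and>
     (\<forall>(n::nat) (ts::nat \<Rightarrow> real). 0 \<le> ts 0 \<and> (\<forall>i<n. ts i < ts (Suc i)) \<longrightarrow>
        prob_space.indep_vars P (\<lambda>_. borel) (\<lambda>i \<omega>. M (ts (Suc i)) \<omega> - M (ts i) \<omega>) {..<n}) \<and>
     (AE \<omega> in P. \<forall>t\<ge>0. continuous (at_right t) (\<lambda>s. M s \<omega>) \<and>
        (t > 0 \<longrightarrow> (\<exists>l. ((\<lambda>s. M s \<omega>) \<longlongrightarrow> l) (at_left t))))"

definition rescale :: "(real \<Rightarrow> real) \<Rightarrow> real \<Rightarrow> real \<Rightarrow> real" where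
  "rescale f v x = v\<^sup>2 * f (x / v)"

end

theory Submission
  imports Defs
begin

(* Since f <= 6 (1 - cos), the expectation of f^v(M_t) is at most 6 v^2 (1 - Re exp (t psi(1/v))),
   psi being the Levy exponent, hence at most 6 v^2 (t |Re psi| + t^2 (Im psi)^2 / 2).
   Splitting the Levy integral at |x| = v, the growth condition together with a dyadic
   decomposition of the tail mu{|x| > v} = O(v^-alpha) gives Re psi(1/v) = O(v^-alpha) and
   Im psi(1/v) = O(v^(-1-alpha/2)). For v = t^beta the two terms become O(t^(1+beta(2-alpha)))
   and O(t^(2-alpha beta)), and the second is dominated by the first precisely because
   beta <= 1/2. *)

lemma cos_le_taylor4: "cos (x::real) \<le> 1 - x^2/2 + x^4/24"
proof -
  let ?e = "iexp x - (\<Sum>k \<le> 3. (\<i> * x)^k / fact k)"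
  have "cmod ?e \<le> x^4/24"
    using iexp_approx1[of x 3] by (simp add: power_even_abs fact_numeral)
  then have "\<bar>Re ?e\<bar> \<le> x^4/24"
    using abs_Re_le_cmod[of ?e] by linarith
  moreover have "Re ?e = cos x - 1 + x^2/2"
    by (simp add: numeral_eq_Suc Re_exp fact_numeral power2_eq_square)
  ultimately show ?thesis by linarith
qed

lemma one_minus_cos_le: "1 - cos (x::real) \<le> x^2/2"
proof -
  let ?e = "iexp x - (\<Sum>k \<le> 1. (\<i> * x)^k / fact k)"
  have "\<bar>Re ?e\<bar> \<le> \<bar>x\<bar>^2 / fact 2"
    using iexp_approx1[of x 1] abs_Re_le_cmod[of ?e] by (simp add: numeral_eq_Suc)
  moreover have "Re ?e = cos x - 1" by (simp add: Re_exp)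
  ultimately show ?thesis by (simp add: fact_numeral)
qed

lemma abs_sin_minus_self_le: "\<bar>sin (x::real) - x\<bar> \<le> \<bar>x\<bar>^3/6"
proof -
  let ?e = "iexp x - (\<Sum>k \<le> 2. (\<i> * x)^k / fact k)"
  have "\<bar>Im ?e\<bar> \<le> \<bar>x\<bar>^3 / fact 3"
    using iexp_approx1[of x 2] abs_Im_le_cmod[of ?e] by (simp add: numeral_eq_Suc)
  moreover have "Im ?e = sin x - x"
    by (simp add: numeral_eq_Suc Im_exp fact_numeral power2_eq_square)
  ultimately show ?thesis by (simp add: fact_numeral)
qed

lemma cmod_iexp_minus_linear_le: "cmod (iexp x - 1 - \<i> * complex_of_real x) \<le> x^2/2"
  using iexp_approx1[of x 1] by (simp add: fact_numeral diff_diff_eq power2_eq_square)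

lemma bump_le_one_minus_cos:
  fixes f :: "real \<Rightarrow> real"
  assumes f_inner: "\<And>x. \<bar>x\<bar> \<le> 1 \<Longrightarrow> f x = x\<^sup>2"
    and f_outer: "\<And>x. \<bar>x\<bar> > 2 \<Longrightarrow> f x = 0"
    and f_mid: "\<And>x. 1 < \<bar>x\<bar> \<Longrightarrow> \<bar>x\<bar> \<le> 2 \<Longrightarrow> 0 \<le> f x \<and> f x \<le> 2"
  shows "0 \<le> f y \<and> f y \<le> 6 * (1 - cos y)"
proof -
  have taylor: "cos y \<le> 1 - y^2/2 + (y^2)^2/24"
    using cos_le_taylor4[of y] by simp
  consider "\<bar>y\<bar> \<le> 1" | "1 < \<bar>y\<bar> \<and> \<bar>y\<bar> \<le> 2" | "\<bar>y\<bar> > 2" by linarith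
  then show ?thesis
  proof cases
    case 1
    then have "y^2 \<le> 1" by (simp add: abs_square_le_1)
    then have "(y^2)^2 \<le> y^2" by (simp add: power2_eq_square mult_left_le_one_le)
    then have "y^2 \<le> 6 * (1 - cos y)" using taylor zero_le_power2[of y] by argo
    then show ?thesis using f_inner[OF 1] by simp
  next
    case 2
    then have y2: "1 \<le> y^2" "y^2 \<le> 4"
      using one_le_power[of "\<bar>y\<bar>" 2] abs_le_square_iff[of y 2] by simp_all
    then have "(y^2 - 1) * (y^2 - 4) \<le> 0" by (simp add: mult_nonneg_nonpos)
    then have "(y^2)^2 \<le> 5 * y^2 - 4" by (simp add: algebra_simps power2_eq_square)
    then have "cos y \<le> 2/3" using taylor y2 by linarith
    then show ?thesis using f_mid 2 by fastforce
  next
    case 3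
    then show ?thesis using f_outer[OF 3] by simp
  qed
qed

lemma one_minus_Re_exp_le:
  fixes z :: complex
  assumes "Re z \<le> 0"
  shows "1 - Re (exp z) \<le> - Re z + (Im z)^2/2"
proof -
  have "1 - Re (exp z) = (1 - exp (Re z)) + exp (Re z) * (1 - cos (Im z))"
    by (simp add: Re_exp algebra_simps)
  also have "\<dots> \<le> - Re z + 1 * ((Im z)^2/2)"
  proof (rule add_mono)
    show "1 - exp (Re z) \<le> - Re z" using exp_ge_add_one_self[of "Re z"] by linarith
    show "exp (Re z) * (1 - cos (Im z)) \<le> 1 * ((Im z)^2/2)"
      using assms one_minus_cos_le[of "Im z"] by (intro mult_mono) auto
  qed
  finally show ?thesis by simp
qed

lemma expectation_rescale_le_char:
  fixes P :: "'a measure" and X :: "'a \<Rightarrow> real" and f :: "real \<Rightarrow> real"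
  assumes P: "prob_space P" and X: "X \<in> borel_measurable P"
    and f_inner: "\<And>x. \<bar>x\<bar> \<le> 1 \<Longrightarrow> f x = x\<^sup>2"
    and f_outer: "\<And>x. \<bar>x\<bar> > 2 \<Longrightarrow> f x = 0"
    and f_mid: "\<And>x. 1 < \<bar>x\<bar> \<Longrightarrow> \<bar>x\<bar> \<le> 2 \<Longrightarrow> 0 \<le> f x \<and> f x \<le> 2"
    and v: "0 < v"
  shows "0 \<le> (\<integral>\<omega>. rescale f v (X \<omega>) \<partial>P)"
    and "(\<integral>\<omega>. rescale f v (X \<omega>) \<partial>P) \<le> 6 * v^2 * (1 - Re (char (distr P borel X) (1/v)))"
proof -
  interpret prob_space P by (rule P)
  have f: "0 \<le> f y \<and> f y \<le> 6 * (1 - cos y)" for y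
    using bump_le_one_minus_cos[OF f_inner f_outer f_mid] .
  show "0 \<le> (\<integral>\<omega>. rescale f v (X \<omega>) \<partial>P)"
    by (rule Bochner_Integration.integral_nonneg) (simp add: rescale_def f)
  have int_cos: "integrable P (\<lambda>\<omega>. cos (1/v * X \<omega>))"
    by (rule integrable_const_bound[where B=1]) (use X in auto)
  have "(\<integral>\<omega>. rescale f v (X \<omega>) \<partial>P) \<le> (\<integral>\<omega>. 6 * v^2 * (1 - cos (1/v * X \<omega>)) \<partial>P)"
  proof (rule integral_mono')
    show "integrable P (\<lambda>\<omega>. 6 * v^2 * (1 - cos (1/v * X \<omega>)))" using int_cos by simp
    show "rescale f v (X \<omega>) \<le> 6 * v^2 * (1 - cos (1/v * X \<omega>))" for \<omega>
    proof -
      have "v^2 * f (X \<omega> / v) \<le> v^2 * (6 * (1 - cos (X \<omega> / v)))"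
        using f[of "X \<omega> / v"] by (intro mult_left_mono) auto
      then show ?thesis by (simp add: rescale_def algebra_simps)
    qed
    show "0 \<le> 6 * v^2 * (1 - cos (1/v * X \<omega>))" for \<omega> by simp
  qed
  also have "\<dots> = 6 * v^2 * (1 - (\<integral>\<omega>. cos (1/v * X \<omega>) \<partial>P))"
    using int_cos by (simp add: prob_space)
  also have "(\<integral>\<omega>. cos (1/v * X \<omega>) \<partial>P) = Re (char (distr P borel X) (1/v))"
  proof -
    have "integrable P (\<lambda>\<omega>. iexp (1/v * X \<omega>))"
      by (rule integrable_iexp) (use X in auto)
    then show ?thesis
      unfolding char_def using X by (simp add: integral_distr integral_Re[symmetric] Re_exp)
  qed
  finally show "(\<integral>\<omega>. rescale f v (X \<omega>) \<partial>P) \<le> 6 * v^2 * (1 - Re (char (distr P borel X) (1/v)))" .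
qed

lemma indicator_annulus_le_dyadic_sum:
  fixes w x :: real
  assumes w: "0 < w"
  shows "indicator {x. w < \<bar>x\<bar> \<and> \<bar>x\<bar> \<le> w * 2^N} x
     \<le> (\<Sum>k\<in>{1..N}. 4 / (w * 2^k)^2 * (indicator {-(w * 2^k)..w * 2^k} x * x^2))"
proof (induction N)
  case (Suc N)
  let ?s = "\<lambda>k. 4 / (w * 2^k)^2 * (indicator {-(w * 2^k)..w * 2^k} x * x^2) :: real"
  have "indicator {x. w < \<bar>x\<bar> \<and> \<bar>x\<bar> \<le> w * 2^Suc N} x
      \<le> indicator {x. w < \<bar>x\<bar> \<and> \<bar>x\<bar> \<le> w * 2^N} x + ?s (Suc N)"
  proof (cases "w * 2^N < \<bar>x\<bar> \<and> \<bar>x\<bar> \<le> w * 2^Suc N")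
    case True
    then have "(w * 2^N)^2 \<le> x^2"
      using w by (simp add: abs_le_square_iff[symmetric])
    then have "1 \<le> ?s (Suc N)"
      using True w by (simp add: power_mult_distrib field_simps indicator_def abs_le_iff)
    then show ?thesis by (simp add: indicator_def)
  next
    case False
    have "w * 2^N \<le> w * 2^Suc N" using w by simp
    with False show ?thesis by (auto simp: indicator_def)
  qed
  then show ?case using Suc.IH by simp
qed (auto simp: indicator_def)

lemma abs_sin_minus_self_le_split:
  fixes v l x :: real
  assumes v: "0 < v" and l: "0 < l"
  shows "\<bar>sin (x / v) - x / v\<bar>
    \<le> indicator {-v..v} x * x\<^sup>2 / v\<^sup>2 + l / v * indicator {x. v < \<bar>x\<bar>} x + x\<^sup>2 / (l * v)"
proof (cases "\<bar>x\<bar> \<le> v")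
  case True
  then have "\<bar>x / v\<bar> \<le> 1" using v by simp
  then have "\<bar>x / v\<bar>^3 \<le> \<bar>x / v\<bar>^2" using power_decreasing[of 2 3 "\<bar>x / v\<bar>"] by simp
  then have "\<bar>sin (x / v) - x / v\<bar> \<le> x\<^sup>2 / v\<^sup>2"
    using abs_sin_minus_self_le[of "x / v"] by (simp add: power_divide)
  moreover have "0 \<le> x\<^sup>2 / (l * v)" using v l by simp
  moreover have "indicator {-v..v} x = (1::real)" "indicator {x. v < \<bar>x\<bar>} x = (0::real)"
    using True by (auto simp: indicator_def)
  ultimately show ?thesis by simp
next
  case False
  have am_gm: "2 * \<bar>x\<bar> \<le> l + x\<^sup>2 / l"
  proof -
    have "0 \<le> (\<bar>x\<bar> - l)\<^sup>2" by simp
    then show ?thesis using l by (simp add: field_simps power2_eq_square)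
  qed
  have "\<bar>sin (x / v) - x / v\<bar> \<le> 2 * \<bar>x\<bar> / v"
    using abs_sin_x_le_abs_x[of "x / v"] v by (simp add: abs_divide)
  also have "\<dots> \<le> (l + x\<^sup>2 / l) / v"
    using am_gm v by (simp add: divide_right_mono)
  also have "\<dots> = indicator {-v..v} x * x\<^sup>2 / v\<^sup>2 + l / v * indicator {x. v < \<bar>x\<bar>} x + x\<^sup>2 / (l * v)"
    using False by (auto simp: indicator_def add_divide_distrib)
  finally show ?thesis .
qed

lemma powr_neg_one_minus_half:
  fixes v a :: real
  assumes v: "0 < v"
  shows "v powr (a/2) / v * v powr -a = v powr (-1 - a/2)"
    and "1 / (v powr (a/2) * v) = v powr (-1 - a/2)"
proof -
  have "v powr (a/2) / v * v powr -a = v powr (a/2) / v powr 1 * v powr -a"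
    using v by simp
  also have "\<dots> = v powr (a/2 - 1 + -a)" by (simp only: powr_diff[symmetric] powr_add[symmetric])
  also have "a/2 - 1 + -a = -1 - a/2" by simp
  finally show "v powr (a/2) / v * v powr -a = v powr (-1 - a/2)" .
  have "1 / (v powr (a/2) * v) = v powr 0 / (v powr (a/2) * v powr 1)"
    using v by simp
  also have "\<dots> = v powr (0 - (a/2 + 1))" by (simp only: powr_diff[symmetric] powr_add[symmetric])
  also have "0 - (a/2 + 1) = -1 - a/2" by simp
  finally show "1 / (v powr (a/2) * v) = v powr (-1 - a/2)" .
qed

definition levy_exponent :: "real measure \<Rightarrow> real \<Rightarrow> complex" where
  "levy_exponent \<nu> u = (\<integral>x. iexp (u * x) - 1 - \<i> * complex_of_real (u * x) \<partial>\<nu>)"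

locale small_jump_measure =
  fixes \<nu> :: "real measure" and \<alpha> C :: real
  assumes sets_eq: "sets \<nu> = sets borel"
    and AE_abs_le_1: "AE x in \<nu>. \<bar>x\<bar> \<le> 1"
    and integrable_square: "integrable \<nu> (\<lambda>x. x\<^sup>2)"
    and alpha_pos: "0 < \<alpha>" and alpha_le_2: "\<alpha> \<le> 2"
    and truncated_moment_le:
      "\<And>s. 0 < s \<Longrightarrow> (\<integral>x. indicator {-s..s} x * x\<^sup>2 \<partial>\<nu>) \<le> C * s powr (2 - \<alpha>)"
begin

lemma borel_measurable_eq: "borel_measurable \<nu> = borel_measurable borel"
  by (rule measurable_cong_sets[OF sets_eq refl])

lemma integrable_if_norm_le_square:
  fixes g :: "real \<Rightarrow> 'b::{banach, second_countable_topology}"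
  assumes "g \<in> borel_measurable borel" and "\<And>x. norm (g x) \<le> c * x\<^sup>2"
  shows "integrable \<nu> g"
proof (rule Bochner_Integration.integrable_bound)
  show "integrable \<nu> (\<lambda>x. c * x\<^sup>2)" using integrable_square by simp
  show "AE x in \<nu>. norm (g x) \<le> norm (c * x\<^sup>2)"
    using assms(2) by (intro AE_I2) (smt (verit) real_norm_def abs_ge_self)
qed (use assms(1) in \<open>simp add: borel_measurable_eq\<close>)

lemma integrable_truncated_square: "integrable \<nu> (\<lambda>x. indicator {-s..s} x * x\<^sup>2)"
  by (rule integrable_if_norm_le_square[where c=1]) (auto simp: indicator_def)

lemma integrable_tail:
  assumes "0 < w"
  shows "integrable \<nu> (indicator {x. w < \<bar>x\<bar>} :: real \<Rightarrow> real)"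
proof (rule integrable_if_norm_le_square[where c="1/w^2"])
  have "1 \<le> x^2 / w^2" if "w < \<bar>x\<bar>" for x
    using that assms abs_le_square_iff[of w x] by simp
  then show "norm (indicator {x. w < \<bar>x\<bar>} x :: real) \<le> 1/w^2 * x\<^sup>2" for x
    by (simp add: indicator_def)
qed simp

lemma C_nonneg: "0 \<le> C"
proof -
  have "0 \<le> (\<integral>x. indicator {-1..1} x * x\<^sup>2 \<partial>\<nu>)" by simp
  also have "\<dots> \<le> C" using truncated_moment_le[of 1] by simp
  finally show ?thesis .
qed

lemma tail_le:
  obtains K where "0 \<le> K"
    and "\<And>w. 0 < w \<Longrightarrow> (\<integral>x. indicator {x. w < \<bar>x\<bar>} x \<partial>\<nu>) \<le> K * w powr -\<alpha>"
proof
  define q where "q = (2::real) powr -\<alpha>"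
  have q: "0 < q" "q < 1" unfolding q_def using alpha_pos by (auto intro: powr_less_one)
  show "0 \<le> 4 * C / (1 - q)" using C_nonneg q by simp
  fix w :: real
  assume w: "0 < w"
  obtain N where N: "1 < w * 2^N"
    using real_arch_pow[of 2 "1/w"] w by (auto simp: field_simps)
  let ?s = "\<lambda>k x. 4 / (w * 2^k)^2 * (indicator {-(w * 2^k)..w * 2^k} x * x^2) :: real"
  have "(\<integral>x. indicator {x. w < \<bar>x\<bar>} x \<partial>\<nu>) \<le> (\<integral>x. (\<Sum>k\<in>{1..N}. ?s k x) \<partial>\<nu>)"
  proof (rule integral_mono_AE')
    show "integrable \<nu> (\<lambda>x. \<Sum>k\<in>{1..N}. ?s k x)"
      using integrable_truncated_square by (simp add: power2_eq_square)
    show "AE x in \<nu>. indicator {x. w < \<bar>x\<bar>} x \<le> (\<Sum>k\<in>{1..N}. ?s k x)"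
      using AE_abs_le_1
    proof eventually_elim
      case (elim x)
      then have "indicator {x. w < \<bar>x\<bar>} x = (indicator {x. w < \<bar>x\<bar> \<and> \<bar>x\<bar> \<le> w * 2^N} x :: real)"
        using N by (simp add: indicator_def)
      then show ?case using indicator_annulus_le_dyadic_sum[OF w, of N x] by simp
    qed
    show "AE x in \<nu>. 0 \<le> (\<Sum>k\<in>{1..N}. ?s k x)" by (simp add: sum_nonneg)
  qed
  also have "\<dots> = (\<Sum>k\<in>{1..N}. 4 / (w * 2^k)^2 * (\<integral>x. indicator {-(w * 2^k)..w * 2^k} x * x^2 \<partial>\<nu>))"
    using integrable_truncated_square by (simp add: power2_eq_square)
  also have "\<dots> \<le> (\<Sum>k\<in>{1..N}. 4 / (w * 2^k)^2 * (C * (w * 2^k) powr (2 - \<alpha>)))"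
    using w by (intro sum_mono mult_left_mono truncated_moment_le) auto
  also have "\<dots> = 4 * C * w powr -\<alpha> * (\<Sum>k\<in>{1..N}. q^k)"
  proof -
    have "4 / Y^2 * (C * Y powr (2 - \<alpha>)) = 4 * C * Y powr -\<alpha>" if "0 < Y" for Y :: real
      using that by (simp add: powr_diff powr_minus divide_simps)
    moreover have "(w * 2^k) powr -\<alpha> = w powr -\<alpha> * q^k" for k :: nat
      using w by (simp add: q_def powr_mult powr_power powr_realpow[symmetric] powr_powr mult.commute)
    ultimately have "4 / (w * 2^k)^2 * (C * (w * 2^k) powr (2 - \<alpha>)) = 4 * C * w powr -\<alpha> * q^k"
      for k :: nat
      using w by simp
    then show ?thesis by (simp add: sum_distrib_left)
  qed
  also have "\<dots> \<le> 4 * C * w powr -\<alpha> * (1 / (1 - q))"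
  proof (rule mult_left_mono)
    have "(\<Sum>k\<in>{1..N}. q^k) \<le> (\<Sum>k<Suc N. q^k)"
      using q by (intro sum_mono2) auto
    also have "\<dots> = (1 - q^Suc N) / (1 - q)"
      using q by (subst sum_gp_strict) simp
    also have "\<dots> \<le> 1 / (1 - q)"
      using q by (intro divide_right_mono) auto
    finally show "(\<Sum>k\<in>{1..N}. q^k) \<le> 1 / (1 - q)" .
  qed (use C_nonneg in simp)
  finally show "(\<integral>x. indicator {x. w < \<bar>x\<bar>} x \<partial>\<nu>) \<le> 4 * C / (1 - q) * w powr -\<alpha>"
    by simp
qed

lemma integrable_levy_integrand:
  "integrable \<nu> (\<lambda>x. iexp (u * x) - 1 - \<i> * complex_of_real (u * x))"
proof (rule integrable_if_norm_le_square[where c="u^2/2"])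
  show "cmod (iexp (u * x) - 1 - \<i> * complex_of_real (u * x)) \<le> u^2/2 * x\<^sup>2" for x
    using cmod_iexp_minus_linear_le[of "u * x"] by (simp add: power_mult_distrib)
qed simp

lemma neg_Re_levy_exponent: "- Re (levy_exponent \<nu> u) = (\<integral>x. 1 - cos (u * x) \<partial>\<nu>)"
proof -
  have "Re (levy_exponent \<nu> u) = (\<integral>x. cos (u * x) - 1 \<partial>\<nu>)"
    unfolding levy_exponent_def integral_Re[OF integrable_levy_integrand, symmetric]
    by (simp add: Re_exp)
  then show ?thesis
    by (simp flip: Bochner_Integration.integral_minus)
qed

lemma Im_levy_exponent: "Im (levy_exponent \<nu> u) = (\<integral>x. sin (u * x) - u * x \<partial>\<nu>)"
  unfolding levy_exponent_def integral_Im[OF integrable_levy_integrand, symmetric]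
  by (simp add: Im_exp)

lemma Re_levy_exponent_nonpos: "Re (levy_exponent \<nu> u) \<le> 0"
proof -
  have "0 \<le> (\<integral>x. 1 - cos (u * x) \<partial>\<nu>)" by (rule Bochner_Integration.integral_nonneg) simp
  then show ?thesis by (simp flip: neg_Re_levy_exponent)
qed

lemma neg_Re_levy_exponent_le_split:
  assumes v: "0 < v"
  shows "- Re (levy_exponent \<nu> (1/v))
    \<le> (\<integral>x. indicator {-v..v} x * x\<^sup>2 \<partial>\<nu>) / (2 * v\<^sup>2) + 2 * (\<integral>x. indicator {x. v < \<bar>x\<bar>} x \<partial>\<nu>)"
proof -
  let ?B = "\<lambda>x. indicator {-v..v} x * x\<^sup>2 / (2 * v\<^sup>2) + 2 * indicator {x. v < \<bar>x\<bar>} x :: real"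
  have "- Re (levy_exponent \<nu> (1/v)) \<le> (\<integral>x. ?B x \<partial>\<nu>)"
    unfolding neg_Re_levy_exponent
  proof (rule integral_mono')
    show "integrable \<nu> ?B"
      using integrable_truncated_square integrable_tail[OF v] by simp
    show "1 - cos (1/v * x) \<le> ?B x" for x
      using one_minus_cos_le[of "x/v"] cos_ge_minus_one[of "x/v"]
      by (auto simp: indicator_def power_divide)
    show "0 \<le> ?B x" for x by simp
  qed
  also have "\<dots> = (\<integral>x. indicator {-v..v} x * x\<^sup>2 \<partial>\<nu>) / (2 * v\<^sup>2) + 2 * (\<integral>x. indicator {x. v < \<bar>x\<bar>} x \<partial>\<nu>)"
    using integrable_truncated_square integrable_tail[OF v] by simp
  finally show ?thesis .
qed

lemma abs_Im_levy_exponent_le_split: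
  assumes v: "0 < v" and l: "0 < l"
  shows "\<bar>Im (levy_exponent \<nu> (1/v))\<bar>
    \<le> (\<integral>x. indicator {-v..v} x * x\<^sup>2 \<partial>\<nu>) / v\<^sup>2 + l / v * (\<integral>x. indicator {x. v < \<bar>x\<bar>} x \<partial>\<nu>)
      + (\<integral>x. x\<^sup>2 \<partial>\<nu>) / (l * v)"
proof -
  let ?B = "\<lambda>x. indicator {-v..v} x * x\<^sup>2 / v\<^sup>2 + l / v * indicator {x. v < \<bar>x\<bar>} x + x\<^sup>2 / (l * v) :: real"
  have "\<bar>Im (levy_exponent \<nu> (1/v))\<bar> \<le> (\<integral>x. ?B x \<partial>\<nu>)"
    unfolding Im_levy_exponent
  proof (rule integral_abs_bound_integral)
    show "integrable \<nu> (\<lambda>x. sin (1/v * x) - 1/v * x)"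
      using integrable_Im[OF integrable_levy_integrand[of "1/v"]] by (simp add: Im_exp)
    show "integrable \<nu> ?B"
      using integrable_truncated_square integrable_tail[OF v] integrable_square by simp
    show "\<bar>sin (1/v * x) - 1/v * x\<bar> \<le> ?B x" for x
      using abs_sin_minus_self_le_split[OF v l, of x] by simp
  qed
  also have "\<dots> = (\<integral>x. indicator {-v..v} x * x\<^sup>2 \<partial>\<nu>) / v\<^sup>2
      + l / v * (\<integral>x. indicator {x. v < \<bar>x\<bar>} x \<partial>\<nu>) + (\<integral>x. x\<^sup>2 \<partial>\<nu>) / (l * v)"
    using integrable_truncated_square integrable_tail[OF v] integrable_square by simp
  finally show ?thesis .
qed

lemma neg_Re_levy_exponent_le:
  obtains A where "0 \<le> A" and "\<And>v. 0 < v \<Longrightarrow> - Re (levy_exponent \<nu> (1/v)) \<le> A * v powr -\<alpha>"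
proof -
  obtain K where K: "0 \<le> K" "\<And>w. 0 < w \<Longrightarrow> (\<integral>x. indicator {x. w < \<bar>x\<bar>} x \<partial>\<nu>) \<le> K * w powr -\<alpha>"
    using tail_le by blast
  show ?thesis
  proof (rule that[of "C/2 + 2 * K"])
    show "0 \<le> C/2 + 2 * K" using C_nonneg K(1) by simp
    fix v :: real
    assume v: "0 < v"
    have "- Re (levy_exponent \<nu> (1/v))
        \<le> (\<integral>x. indicator {-v..v} x * x\<^sup>2 \<partial>\<nu>) / (2 * v\<^sup>2) + 2 * (\<integral>x. indicator {x. v < \<bar>x\<bar>} x \<partial>\<nu>)"
      by (rule neg_Re_levy_exponent_le_split[OF v])
    also have "\<dots> \<le> C * v powr (2 - \<alpha>) / (2 * v\<^sup>2) + 2 * (K * v powr -\<alpha>)"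
      using truncated_moment_le[OF v] K(2)[OF v] by (intro add_mono divide_right_mono mult_left_mono) auto
    also have "\<dots> = (C/2 + 2 * K) * v powr -\<alpha>"
      using v by (simp add: powr_diff powr_minus field_simps)
    finally show "- Re (levy_exponent \<nu> (1/v)) \<le> (C/2 + 2 * K) * v powr -\<alpha>" .
  qed
qed

lemma abs_Im_levy_exponent_le:
  obtains B where "0 \<le> B"
    and "\<And>v. 0 < v \<Longrightarrow> v \<le> 1 \<Longrightarrow> \<bar>Im (levy_exponent \<nu> (1/v))\<bar> \<le> B * v powr (-1 - \<alpha>/2)"
proof -
  obtain K where K: "0 \<le> K" "\<And>w. 0 < w \<Longrightarrow> (\<integral>x. indicator {x. w < \<bar>x\<bar>} x \<partial>\<nu>) \<le> K * w powr -\<alpha>"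
    using tail_le by blast
  define G where "G = (\<integral>x. x\<^sup>2 \<partial>\<nu>)"
  have G: "0 \<le> G" unfolding G_def by simp
  show ?thesis
  proof (rule that[of "C + K + G"])
    show "0 \<le> C + K + G" using C_nonneg K(1) G by simp
    fix v :: real
    assume v: "0 < v" "v \<le> 1"
    \<comment> \<open>This AM-GM weight balances the tail term \<open>K v powr -\<alpha>\<close> against the second moment \<open>G\<close>.\<close>
    define l where "l = v powr (\<alpha>/2)"
    have l: "0 < l" using v by (simp add: l_def)
    have "\<bar>Im (levy_exponent \<nu> (1/v))\<bar>
        \<le> (\<integral>x. indicator {-v..v} x * x\<^sup>2 \<partial>\<nu>) / v\<^sup>2 + l / v * (\<integral>x. indicator {x. v < \<bar>x\<bar>} x \<partial>\<nu>)
          + G / (l * v)"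
      unfolding G_def by (rule abs_Im_levy_exponent_le_split[OF v(1) l])
    also have "\<dots> \<le> C * v powr (2 - \<alpha>) / v\<^sup>2 + l / v * (K * v powr -\<alpha>) + G / (l * v)"
      using truncated_moment_le[OF v(1)] K(2)[OF v(1)] v l
      by (intro add_mono mult_left_mono divide_right_mono) auto
    also have "\<dots> = C * (v powr (2 - \<alpha>) / v\<^sup>2) + K * (l / v * v powr -\<alpha>) + G * (1 / (l * v))"
      by (simp add: algebra_simps)
    also have "\<dots> = C * v powr -\<alpha> + (K + G) * v powr (-1 - \<alpha>/2)"
    proof -
      have "v powr (2 - \<alpha>) / v\<^sup>2 = v powr -\<alpha>"
        using v by (simp add: powr_diff powr_minus field_simps)
      then show ?thesis
        unfolding l_def powr_neg_one_minus_half[OF v(1)] by (simp add: algebra_simps)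
    qed
    also have "\<dots> \<le> (C + K + G) * v powr (-1 - \<alpha>/2)"
    proof -
      have "v powr -\<alpha> \<le> v powr (-1 - \<alpha>/2)"
        using v alpha_le_2 by (intro powr_mono') auto
      then show ?thesis using C_nonneg by (simp add: algebra_simps mult_left_mono)
    qed
    finally show "\<bar>Im (levy_exponent \<nu> (1/v))\<bar> \<le> (C + K + G) * v powr (-1 - \<alpha>/2)" .
  qed
qed

lemma one_minus_Re_exp_levy_exponent_le:
  obtains A B where "0 \<le> A" "0 \<le> B"
    and "\<And>t v. 0 \<le> t \<Longrightarrow> 0 < v \<Longrightarrow> v \<le> 1 \<Longrightarrow>
      1 - Re (exp (complex_of_real t * levy_exponent \<nu> (1/v)))
        \<le> A * t * v powr -\<alpha> + B * t\<^sup>2 * v powr (-2 - \<alpha>)"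
proof -
  obtain A where A: "0 \<le> A" "\<And>v. 0 < v \<Longrightarrow> - Re (levy_exponent \<nu> (1/v)) \<le> A * v powr -\<alpha>"
    using neg_Re_levy_exponent_le by blast
  obtain D where D: "0 \<le> D"
    "\<And>v. 0 < v \<Longrightarrow> v \<le> 1 \<Longrightarrow> \<bar>Im (levy_exponent \<nu> (1/v))\<bar> \<le> D * v powr (-1 - \<alpha>/2)"
    using abs_Im_levy_exponent_le by blast
  have "1 - Re (exp (complex_of_real t * levy_exponent \<nu> (1/v)))
      \<le> A * t * v powr -\<alpha> + D\<^sup>2 / 2 * t\<^sup>2 * v powr (-2 - \<alpha>)"
    if t: "0 \<le> t" and v: "0 < v" "v \<le> 1" for t v
  proof -
    let ?\<psi> = "levy_exponent \<nu> (1/v)"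
    have "1 - Re (exp (complex_of_real t * ?\<psi>)) \<le> t * (- Re ?\<psi>) + t\<^sup>2 * (Im ?\<psi>)\<^sup>2 / 2"
      using one_minus_Re_exp_le[of "complex_of_real t * ?\<psi>"] Re_levy_exponent_nonpos[of "1/v"] t
      by (simp add: mult_nonneg_nonpos power_mult_distrib)
    also have "\<dots> \<le> t * (A * v powr -\<alpha>) + t\<^sup>2 * (D * v powr (-1 - \<alpha>/2))\<^sup>2 / 2"
    proof -
      have "(Im ?\<psi>)\<^sup>2 \<le> (D * v powr (-1 - \<alpha>/2))\<^sup>2"
        using D(2)[OF v] abs_le_square_iff[of "Im ?\<psi>" "D * v powr (-1 - \<alpha>/2)"] D(1) by simp
      then show ?thesis
        using A(2)[OF v(1)] t by (intro add_mono mult_left_mono divide_right_mono) auto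
    qed
    also have "(D * v powr (-1 - \<alpha>/2))\<^sup>2 = D\<^sup>2 * v powr (-2 - \<alpha>)"
      using v by (simp add: power_mult_distrib powr_power)
    finally show ?thesis by (simp add: algebra_simps)
  qed
  then show ?thesis using that[of A "D\<^sup>2 / 2"] A(1) by simp
qed

lemma rescaled_expectation_bigo:
  fixes P :: "'a measure" and M :: "real \<Rightarrow> 'a \<Rightarrow> real" and f :: "real \<Rightarrow> real" and \<beta> :: real
  assumes P: "prob_space P" and M: "\<And>t. 0 \<le> t \<Longrightarrow> M t \<in> borel_measurable P"
    and char_M: "\<And>t u. 0 \<le> t \<Longrightarrow>
      char (distr P borel (M t)) u = exp (complex_of_real t * levy_exponent \<nu> u)"
    and f_inner: "\<And>x. \<bar>x\<bar> \<le> 1 \<Longrightarrow> f x = x\<^sup>2"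
    and f_outer: "\<And>x. \<bar>x\<bar> > 2 \<Longrightarrow> f x = 0"
    and f_mid: "\<And>x. 1 < \<bar>x\<bar> \<Longrightarrow> \<bar>x\<bar> \<le> 2 \<Longrightarrow> 0 \<le> f x \<and> f x \<le> 2"
    and beta: "0 < \<beta>" "\<beta> \<le> 1/2"
  shows "(\<lambda>t. \<integral>\<omega>. rescale f (t powr \<beta>) (M t \<omega>) \<partial>P) \<in> O[at_right 0](\<lambda>t. t powr (1 + \<beta> * (2 - \<alpha>)))"
proof -
  obtain A B where AB: "0 \<le> A" "0 \<le> B"
    "\<And>t v. 0 \<le> t \<Longrightarrow> 0 < v \<Longrightarrow> v \<le> 1 \<Longrightarrow>
      1 - Re (exp (complex_of_real t * levy_exponent \<nu> (1/v)))
        \<le> A * t * v powr -\<alpha> + B * t\<^sup>2 * v powr (-2 - \<alpha>)"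
    using one_minus_Re_exp_levy_exponent_le by blast
  have "norm (\<integral>\<omega>. rescale f (t powr \<beta>) (M t \<omega>) \<partial>P) \<le> 6 * (A + B) * norm (t powr (1 + \<beta> * (2 - \<alpha>)))"
    if t: "0 < t" "t < 1" for t
  proof -
    define v where "v = t powr \<beta>"
    have v: "0 < v" "v \<le> 1" using t beta by (auto simp: v_def intro: powr_le1)
    let ?E = "\<integral>\<omega>. rescale f v (M t \<omega>) \<partial>P"
    note E = expectation_rescale_le_char[OF P M f_inner f_outer f_mid v(1)]
    have "?E \<le> 6 * v\<^sup>2 * (1 - Re (char (distr P borel (M t)) (1/v)))"
      using E(2)[of t] t by simp
    also have "\<dots> \<le> 6 * v\<^sup>2 * (A * t * v powr -\<alpha> + B * t\<^sup>2 * v powr (-2 - \<alpha>))"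
      using AB(3)[of t v] char_M[of t "1/v"] t v by (intro mult_left_mono) auto
    also have "\<dots> = 6 * A * t * v powr (2 - \<alpha>) + 6 * B * t\<^sup>2 * v powr -\<alpha>"
      using v by (simp add: powr_diff powr_minus powr_add field_simps)
    also have "\<dots> = 6 * A * t powr (1 + \<beta> * (2 - \<alpha>)) + 6 * B * t powr (2 - \<alpha> * \<beta>)"
      using t by (simp add: v_def powr_powr powr_add powr_diff powr_minus field_simps)
    also have "\<dots> \<le> 6 * A * t powr (1 + \<beta> * (2 - \<alpha>)) + 6 * B * t powr (1 + \<beta> * (2 - \<alpha>))"
      using t beta AB(2) by (intro add_left_mono mult_left_mono powr_mono') (auto simp: algebra_simps)
    finally have "?E \<le> 6 * (A + B) * t powr (1 + \<beta> * (2 - \<alpha>))" by (simp add: algebra_simps)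
    moreover have "0 \<le> ?E" using E(1)[of t] t by simp
    ultimately show ?thesis by (simp add: v_def)
  qed
  moreover have "eventually (\<lambda>t. 0 < t \<and> t < (1::real)) (at_right 0)"
    unfolding eventually_at_right_field by (intro exI[of _ 1]) auto
  ultimately show ?thesis
    by (intro bigoI[where c="6 * (A + B)"]) (auto elim: eventually_mono)
qed

end

lemma truncated_moment_le_global:
  fixes \<nu> :: "real measure" and \<alpha> :: real
  assumes sets: "sets \<nu> = sets borel" and square: "integrable \<nu> (\<lambda>x. x\<^sup>2)" and alpha: "\<alpha> \<le> 2"
    and growth: "(\<lambda>s. \<integral>x. indicator {-s..s} x * x\<^sup>2 \<partial>\<nu>) \<in> O[at_right 0](\<lambda>s. s powr (2 - \<alpha>))"
  obtains C where "\<And>s. 0 < s \<Longrightarrow> (\<integral>x. indicator {-s..s} x * x\<^sup>2 \<partial>\<nu>) \<le> C * s powr (2 - \<alpha>)"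
proof -
  let ?H = "\<lambda>s. \<integral>x. indicator {-s..s} x * x\<^sup>2 \<partial>\<nu>"
  define G where "G = (\<integral>x. x\<^sup>2 \<partial>\<nu>)"
  have G: "0 \<le> G" by (simp add: G_def)
  obtain c where "c > 0" and "eventually (\<lambda>s. norm (?H s) \<le> c * norm (s powr (2 - \<alpha>))) (at_right 0)"
    using landau_o.bigE[OF growth] by blast
  then obtain b where b: "0 < b" and near_0: "\<And>s. 0 < s \<Longrightarrow> s < b \<Longrightarrow> ?H s \<le> c * s powr (2 - \<alpha>)"
    unfolding eventually_at_right_field by force
  have "?H s \<le> (c + G / b powr (2 - \<alpha>)) * s powr (2 - \<alpha>)" if s: "0 < s" for s
  proof (cases "s < b")
    case True
    have "0 \<le> G / b powr (2 - \<alpha>) * s powr (2 - \<alpha>)" using G by simp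
    then show ?thesis using near_0[OF s True] by (simp add: algebra_simps)
  next
    case False
    have "?H s \<le> G"
      unfolding G_def using integrable_mult_indicator[of "{-s..s}" \<nu> "\<lambda>x. x\<^sup>2"] sets square
      by (intro integral_mono) (auto simp: indicator_def)
    also have "\<dots> \<le> G / b powr (2 - \<alpha>) * s powr (2 - \<alpha>)"
    proof -
      have "b powr (2 - \<alpha>) \<le> s powr (2 - \<alpha>)" using False b alpha by (intro powr_mono2) auto
      then show ?thesis using b G by (simp add: field_simps mult_left_mono)
    qed
    also have "\<dots> \<le> (c + G / b powr (2 - \<alpha>)) * s powr (2 - \<alpha>)"
      using \<open>c > 0\<close> by (simp add: algebra_simps)
    finally show ?thesis .
  qed
  then show ?thesis using that by blast
qed

lemma
  fixes \<mu> :: "real measure" and A :: "real set" and g :: "real \<Rightarrow> 'b::{banach, second_countable_topology}"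
  assumes sets: "sets \<mu> = sets borel" and A: "A \<in> sets borel" and g: "g \<in> borel_measurable borel"
  shows integrable_density_indicator:
      "integrable (density \<mu> (indicator A)) g \<longleftrightarrow> set_integrable \<mu> A g"
    and integral_density_indicator:
      "integral\<^sup>L (density \<mu> (indicator A)) g = set_lebesgue_integral \<mu> A g"
proof -
  have meas: "borel_measurable \<mu> = borel_measurable borel"
    by (rule measurable_cong_sets[OF sets refl])
  show "integrable (density \<mu> (indicator A)) g \<longleftrightarrow> set_integrable \<mu> A g"
    unfolding set_integrable_def using A g integrable_density[of g \<mu> "indicator A"]
    by (simp add: meas ennreal_indicator)
  show "integral\<^sup>L (density \<mu> (indicator A)) g = set_lebesgue_integral \<mu> A g"
    unfolding set_lebesgue_integral_def using A g integral_density[of g \<mu> "indicator A"]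
    by (simp add: meas ennreal_indicator)
qed

lemma truncated_square_density_indicator:
  fixes \<mu> :: "real measure"
  assumes sets: "sets \<mu> = sets borel" and v: "v \<le> 1"
  shows "(\<integral>x. indicator {-v..v} x * x\<^sup>2 \<partial>density \<mu> (indicator {-1..1}))
    = set_lebesgue_integral \<mu> {-v..v} (\<lambda>x. x\<^sup>2)"
proof -
  have "(\<integral>x. indicator {-v..v} x * x\<^sup>2 \<partial>density \<mu> (indicator {-1..1}))
      = set_lebesgue_integral \<mu> {-1..1} (\<lambda>x. indicator {-v..v} x * x\<^sup>2)"
    by (simp add: integral_density_indicator[OF sets])
  also have "\<dots> = set_lebesgue_integral \<mu> {-v..v} (\<lambda>x. x\<^sup>2)"
    unfolding set_lebesgue_integral_def
    by (rule Bochner_Integration.integral_cong) (use v in \<open>auto simp: indicator_def\<close>)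
  finally show ?thesis .
qed

lemma small_jump_measure_restrict:
  fixes \<mu> :: "real measure" and \<alpha> :: real
  assumes lm: "levy_measure \<mu>" and alpha: "0 < \<alpha>" "\<alpha> \<le> 2"
    and growth: "(\<lambda>v. set_lebesgue_integral \<mu> {-v..v} (\<lambda>x. x\<^sup>2)) \<in> O[at_right 0](\<lambda>v. v powr (2 - \<alpha>))"
  obtains C where "small_jump_measure (density \<mu> (indicator {-1..1})) \<alpha> C"
proof -
  let ?\<nu> = "density \<mu> (indicator {-1..1})"
  have sets: "sets \<mu> = sets borel" and sets_\<nu>: "sets ?\<nu> = sets borel"
    using lm by (simp_all add: levy_measure_def)
  have meas: "borel_measurable \<mu> = borel_measurable borel"
    by (rule measurable_cong_sets[OF sets refl])
  have AE: "AE x in ?\<nu>. \<bar>x\<bar> \<le> 1"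
    by (subst AE_density) (simp add: meas, rule AE_I2, simp add: indicator_def abs_le_iff)
  have "integrable \<mu> (\<lambda>x. min 1 (x\<^sup>2))"
    using lm by (intro integrableI_nonneg) (auto simp: levy_measure_def meas)
  then have "set_integrable \<mu> {-1..1} (\<lambda>x. x\<^sup>2)"
    unfolding set_integrable_def
    by (rule Bochner_Integration.integrable_bound) (auto simp: meas indicator_def abs_square_le_1)
  then have square: "integrable ?\<nu> (\<lambda>x. x\<^sup>2)"
    using integrable_density_indicator[OF sets, of "{-1..1}" "\<lambda>x. x\<^sup>2"] by simp
  have "eventually (\<lambda>v. set_lebesgue_integral \<mu> {-v..v} (\<lambda>x. x\<^sup>2)
      = (\<integral>x. indicator {-v..v} x * x\<^sup>2 \<partial>?\<nu>)) (at_right 0)"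
    unfolding eventually_at_right_field
    using truncated_square_density_indicator[OF sets] by (intro exI[of _ 1]) auto
  from landau_o.big.in_cong[OF this] growth
  have "(\<lambda>s. \<integral>x. indicator {-s..s} x * x\<^sup>2 \<partial>?\<nu>) \<in> O[at_right 0](\<lambda>s. s powr (2 - \<alpha>))"
    by simp
  then obtain C where "\<And>s. 0 < s \<Longrightarrow> (\<integral>x. indicator {-s..s} x * x\<^sup>2 \<partial>?\<nu>) \<le> C * s powr (2 - \<alpha>)"
    using truncated_moment_le_global[OF sets_\<nu> square alpha(2)] by blast
  with sets_\<nu> AE square alpha show ?thesis
    by (intro that[of C]) (unfold_locales)
qed

theorem proposition4p3:
  fixes P :: "'a measure" and M :: "real \<Rightarrow> 'a \<Rightarrow> real"
    and \<mu> :: "real measure" and \<alpha> \<beta> :: real and f :: "real \<Rightarrow> real"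
  assumes levy: "levy_process P M"
    and lm: "levy_measure \<mu>"
    and supp: "emeasure \<mu> (UNIV - {-1..1}) = 0"
    and char_M: "\<And>t u. t \<ge> 0 \<Longrightarrow>
        char (distr P borel (M t)) u =
        exp (complex_of_real t *
          set_lebesgue_integral \<mu> {-1..1} (\<lambda>x. iexp (u * x) - 1 - \<i> * complex_of_real (u * x)))"
    and alpha: "0 < \<alpha>" "\<alpha> < 2"
    and growth: "(\<lambda>v. set_lebesgue_integral \<mu> {-v..v} (\<lambda>x. x\<^sup>2)) \<in> O[at_right 0](\<lambda>v. v powr (2 - \<alpha>))"
    and f_smooth: "C_infinity f"
    and f_inner: "\<And>x. \<bar>x\<bar> \<le> 1 \<Longrightarrow> f x = x\<^sup>2"
    and f_outer: "\<And>x. \<bar>x\<bar> > 2 \<Longrightarrow> f x = 0"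
    and f_mid: "\<And>x. 1 < \<bar>x\<bar> \<Longrightarrow> \<bar>x\<bar> \<le> 2 \<Longrightarrow> 0 \<le> f x \<and> f x \<le> 2"
    and beta: "0 < \<beta>" "\<beta> < 1/2"
  shows "(\<lambda>t. \<integral>\<omega>. rescale f (t powr \<beta>) (M t \<omega>) \<partial>P)
           \<in> O[at_right 0](\<lambda>t. t powr (1 + \<beta> * (2 - \<alpha>)))"
proof -
  let ?\<nu> = "density \<mu> (indicator {-1..1})"
  obtain C where "small_jump_measure ?\<nu> \<alpha> C"
    using small_jump_measure_restrict[OF lm alpha(1) less_imp_le[OF alpha(2)] growth] by blast
  then interpret small_jump_measure ?\<nu> \<alpha> C .
  have sets: "sets \<mu> = sets borel" using lm by (simp add: levy_measure_def)
  have P: "prob_space P" and M: "\<And>t. 0 \<le> t \<Longrightarrow> M t \<in> borel_measurable P"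
    using levy by (auto simp: levy_process_def)
  have "char (distr P borel (M t)) u = exp (complex_of_real t * levy_exponent ?\<nu> u)" if "0 \<le> t" for t u
    using char_M[OF that] by (simp add: levy_exponent_def integral_density_indicator[OF sets])
  from rescaled_expectation_bigo[OF P M this f_inner f_outer f_mid beta(1)] beta(2) show ?thesis
    by simp
qed

end
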